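(* Let $q$ be an $\varepsilon$-LDP cap-based mechanism from $\mathcal{X}$ to $\mathcal{Z}$, let $\mathbf{x}\in\mathcal{X}$, let $p$ be the uniform distribution on $\mathcal{Z}$, and let $\mathbf{z}_1,\dots,\mathbf{z}_N$ be $N$ candidates drawn from $p$, with $\theta$ the fraction of candidates in $\mathsf{Cap}_{\mathbf{x}}$. Then \[ D_{\mathrm{KL}}\big(\pi^{\mathrm{mrc}}_{\mathbf{x},\theta}\,\big\|\,\pi^{\mathrm{mmrc}}_{\mathbf{x},\theta}\big)\le\varepsilon\log e . \]
   Context: $\log$ is base 2 and the KL divergence is measured in bits. A mechanism $q$ is $\varepsilon$-LDP if $q(\mathbf{z}\mid\mathbf{x})\le e^\varepsilon q(\mathbf{z}\mid\mathbf{x}')$ for all $\mathbf{x},\mathbf{x}',\mathbf{z}$. Cap-based: $q(\mathbf{z}\mid\mathbf{x})=c_1$ if $\mathbf{z}\in\mathsf{Cap}_{\mathbf{x}}$, $=c_2$ otherwise, with constants $c_1\ge c_2$ independent of $\mathbf{x},\mathbf{z}$ and $\mathsf{Cap}_{\mathbf{x}}\subseteq\mathcal{Z}$ such that $\bar\theta=\mathbb{P}_{\mathbf{z}\sim\mathrm{Unif}(\mathcal{Z})}(\mathbf{z}\in\mathsf{Cap}_{\mathbf{x}})$ is independent of $\mathbf{x}$ and $\ge c_2/(2c_1)$. $\pi^{\mathrm{mrc}}_{\mathbf{x},\theta}(k)=\frac1N\frac{c_1}{\theta c_1+(1-\theta)c_2}$ if $\mathbf{z}_k\in\mathsf{Cap}_{\mathbf{x}}$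 and $\frac1N\frac{c_2}{\theta c_1+(1-\theta)c_2}$ otherwise. With $t_u=\frac1N\frac{c_1}{\bar\theta c_1+(1-\bar\theta)c_2}$, $t_l=\frac1N\frac{c_2}{\bar\theta c_1+(1-\bar\theta)c_2}$: $\pi^{\mathrm{mmrc}}_{\mathbf{x},\theta}=\pi^{\mathrm{mrc}}_{\mathbf{x},\theta}$ if $\theta=\bar\theta$; if $\theta<\bar\theta$, $\pi^{\mathrm{mmrc}}(k)=t_u$ for cap candidates and $\frac{1-N\theta t_u}{N(1-\theta)}$ otherwise; if $\theta>\bar\theta$, $\pi^{\mathrm{mmrc}}(k)=t_l$ for non-cap candidates and $\frac{1-N(1-\theta)t_l}{N\theta}$ otherwise. *)

theory Defs
  imports "HOL-Probability.Probability"
begin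

definition is_ldp :: "real \<Rightarrow> 'x set \<Rightarrow> 'z set \<Rightarrow> ('x \<Rightarrow> 'z \<Rightarrow> real) \<Rightarrow> bool" where
  "is_ldp \<epsilon> X Z q \<longleftrightarrow> (\<forall>x\<in>X. \<forall>x'\<in>X. \<forall>z\<in>Z. q x z \<le> exp \<epsilon> * q x' z)"

definition cap_based :: "'x set \<Rightarrow> 'z measure \<Rightarrow> ('x \<Rightarrow> 'z \<Rightarrow> real) \<Rightarrow> ('x \<Rightarrow> 'z set)
    \<Rightarrow> real \<Rightarrow> real \<Rightarrow> real \<Rightarrow> bool" where
  "cap_based X P q Cap c1 c2 \<theta>bar \<longleftrightarrow>
     0 < c2 \<and> c2 \<le> c1 \<and>
     (\<forall>x\<in>X. Cap x \<subseteq> space P \<and> Cap x \<in> sets P \<and> measure P (Cap x) = \<theta>bar) \<and>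
     (\<forall>x\<in>X. \<forall>z\<in>space P. q x z = (if z \<in> Cap x then c1 else c2)) \<and>
     \<theta>bar \<ge> c2 / (2 * c1)"

definition pi_mrc :: "('x \<Rightarrow> 'z set) \<Rightarrow> real \<Rightarrow> real \<Rightarrow> nat \<Rightarrow> (nat \<Rightarrow> 'z) \<Rightarrow> 'x \<Rightarrow> real \<Rightarrow> nat \<Rightarrow> real" where
  "pi_mrc Cap c1 c2 N zs x \<theta> k =
     (if zs k \<in> Cap x then (1 / real N) * (c1 / (\<theta> * c1 + (1 - \<theta>) * c2))
      else (1 / real N) * (c2 / (\<theta> * c1 + (1 - \<theta>) * c2)))"

definition pi_mmrc :: "('x \<Rightarrow> 'z set) \<Rightarrow> real \<Rightarrow> real \<Rightarrow> real \<Rightarrow> nat \<Rightarrow> (nat \<Rightarrow> 'z) \<Rightarrow> 'x \<Rightarrow> real \<Rightarrow> nat \<Rightarrow> real" where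
  "pi_mmrc Cap c1 c2 \<theta>bar N zs x \<theta> k =
     (let t_u = (1 / real N) * (c1 / (\<theta>bar * c1 + (1 - \<theta>bar) * c2));
          t_l = (1 / real N) * (c2 / (\<theta>bar * c1 + (1 - \<theta>bar) * c2))
      in if \<theta> = \<theta>bar then pi_mrc Cap c1 c2 N zs x \<theta> k
         else if \<theta> < \<theta>bar then
           (if zs k \<in> Cap x then t_u else (1 - real N * \<theta> * t_u) / (real N * (1 - \<theta>)))
         else
           (if zs k \<notin> Cap x then t_l else (1 - real N * (1 - \<theta>) * t_l) / (real N * \<theta>)))"

definition kl_bits :: "(nat \<Rightarrow> real) \<Rightarrow> (nat \<Rightarrow> real) \<Rightarrow> nat set \<Rightarrow> real" where
  "kl_bits p r K = (\<Sum>k\<in>K. if p k = 0 then 0 else p k * log 2 (p k / r k))"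

end

theory Submission
  imports Defs
begin

text \<open>Write \<open>D(\<theta>) = \<theta> c\<^sub>1 + (1 - \<theta>) c\<^sub>2\<close>, so that the MRC weights are \<open>c\<^sub>1 / (N D(\<theta>))\<close> on the
  cap and \<open>c\<^sub>2 / (N D(\<theta>))\<close> off it. Every MMRC weight is at least \<open>c\<^sub>2 / (N D(\<theta>))\<close>: the
  weights pinned to \<open>t\<^sub>u\<close> or \<open>t\<^sub>l\<close> compare with it because \<open>c\<^sub>2 \<le> D \<le> c\<^sub>1\<close> and \<open>D\<close> is monotone;
  of the weights absorbing the remaining mass, those on the cap are at least \<open>1/N\<close>, and those
  off the cap exceed the MRC weight, because for \<open>\<theta> < \<theta>bar\<close> MMRC moves mass from the cap to its
  complement. Hence every likelihood ratio is at most \<open>c\<^sub>1 / c\<^sub>2 \<le> e\<^sup>\<epsilon>\<close>, and the KL divergence,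
  an average of log likelihood ratios, is at most \<open>\<epsilon> log e\<close>.\<close>

lemma kl_bits_le_log_of_ratio_bound:
  assumes "finite K" "sum p K = 1" "0 < B"
    and nonneg: "\<And>k. k \<in> K \<Longrightarrow> 0 \<le> p k"
    and ratio: "\<And>k. k \<in> K \<Longrightarrow> 0 < p k \<Longrightarrow> p k \<le> B * r k"
  shows "kl_bits p r K \<le> log 2 B"
proof -
  have "kl_bits p r K \<le> (\<Sum>k\<in>K. p k * log 2 B)"
    unfolding kl_bits_def
  proof (rule sum_mono)
    fix k assume k: "k \<in> K"
    show "(if p k = 0 then 0 else p k * log 2 (p k / r k)) \<le> p k * log 2 B"
    proof (cases "p k = 0")
      case False
      with nonneg[OF k] have "0 < p k" by linarith
      moreover from ratio[OF k this] have "p k \<le> B * r k" .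
      ultimately have "0 < r k"
        using \<open>0 < B\<close> zero_less_mult_pos[of B "r k"] by linarith
      with \<open>p k \<le> B * r k\<close> have "p k / r k \<le> B"
        by (simp add: divide_le_eq mult.commute)
      with \<open>0 < p k\<close> \<open>0 < r k\<close> have "log 2 (p k / r k) \<le> log 2 B"
        by (simp add: log_mono)
      with \<open>0 < p k\<close> show ?thesis by (simp add: mult_left_mono)
    qed simp
  qed
  also have "\<dots> = log 2 B"
    using assms(2) by (simp add: sum_distrib_right[symmetric])
  finally show ?thesis .
qed

lemma cap_based_ldp_imp_le_exp:
  assumes "is_ldp \<epsilon> X (space P) q" "cap_based X P q Cap c1 c2 \<theta>bar"
    and "\<exists>x1\<in>X. \<exists>x2\<in>X. \<exists>z\<in>space P. z \<in> Cap x1 \<and> z \<notin> Cap x2"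
  shows "c1 \<le> exp \<epsilon> * c2"
proof -
  from assms(3) obtain x1 x2 z
    where "x1 \<in> X" "x2 \<in> X" "z \<in> space P" "z \<in> Cap x1" "z \<notin> Cap x2"
    by blast
  with assms(1,2) show ?thesis
    unfolding is_ldp_def cap_based_def by force
qed

definition mrc_normalizer :: "real \<Rightarrow> real \<Rightarrow> real \<Rightarrow> real" where
  "mrc_normalizer c1 c2 \<theta> = \<theta> * c1 + (1 - \<theta>) * c2"

lemma mrc_normalizer_bounds:
  assumes "c2 \<le> c1" "0 \<le> \<theta>" "\<theta> \<le> 1"
  shows "c2 \<le> mrc_normalizer c1 c2 \<theta>" "mrc_normalizer c1 c2 \<theta> \<le> c1"
proof -
  have "0 \<le> \<theta> * (c1 - c2)" "0 \<le> (1 - \<theta>) * (c1 - c2)"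
    using assms by simp_all
  then show "c2 \<le> mrc_normalizer c1 c2 \<theta>" "mrc_normalizer c1 c2 \<theta> \<le> c1"
    unfolding mrc_normalizer_def by (simp_all add: algebra_simps)
qed

lemma mrc_normalizer_mono:
  assumes "c2 \<le> c1" "\<theta> \<le> \<theta>'"
  shows "mrc_normalizer c1 c2 \<theta> \<le> mrc_normalizer c1 c2 \<theta>'"
proof -
  have "\<theta> * (c1 - c2) \<le> \<theta>' * (c1 - c2)"
    using assms by (simp add: mult_right_mono)
  then show ?thesis
    unfolding mrc_normalizer_def by (simp add: algebra_simps)
qed

lemma pi_mrc_eq:
  "pi_mrc Cap c1 c2 N zs x \<theta> k =
     (if zs k \<in> Cap x then c1 else c2) / (real N * mrc_normalizer c1 c2 \<theta>)"
  unfolding pi_mrc_def mrc_normalizer_def by simp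

lemma card_fraction_bounds:
  "0 \<le> real (card {k. k < N \<and> P k}) / real N" "real (card {k. k < N \<and> P k}) / real N \<le> 1"
proof -
  have "card {k. k < N \<and> P k} \<le> card {..<N}"
    by (rule card_mono) auto
  then show "0 \<le> real (card {k. k < N \<and> P k}) / real N" "real (card {k. k < N \<and> P k}) / real N \<le> 1"
    by (simp_all add: divide_le_eq)
qed

lemma sum_pi_mrc:
  assumes "0 < N" "0 < c2" "c2 \<le> c1"
    and \<theta>: "\<theta> = real (card {k. k < N \<and> zs k \<in> Cap x}) / real N"
  shows "(\<Sum>k<N. pi_mrc Cap c1 c2 N zs x \<theta> k) = 1"
proof -
  define A where "A = {k. k < N \<and> zs k \<in> Cap x}"
  have "A \<subseteq> {..<N}" unfolding A_def by auto
  then have card_A: "card A \<le> N" "card ({..<N} - A) = N - card A"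
    using card_mono[of "{..<N}" A] by (simp_all add: card_Diff_subset finite_subset)
  have "c2 \<le> mrc_normalizer c1 c2 \<theta>"
    unfolding \<theta> by (rule mrc_normalizer_bounds[OF \<open>c2 \<le> c1\<close> card_fraction_bounds])
  with \<open>0 < c2\<close> have D: "0 < mrc_normalizer c1 c2 \<theta>" by linarith
  have "{..<N} \<inter> {k. zs k \<in> Cap x} = A" "{..<N} \<inter> - {k. zs k \<in> Cap x} = {..<N} - A"
    unfolding A_def by auto
  then have "(\<Sum>k<N. if zs k \<in> Cap x then c1 else c2) = real (card A) * c1 + real (N - card A) * c2"
    by (simp add: sum.If_cases card_A(2))
  also have "\<dots> = real N * mrc_normalizer c1 c2 \<theta>"
    using card_A \<open>0 < N\<close> unfolding mrc_normalizer_def \<theta> A_def[symmetric]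
    by (simp add: of_nat_diff field_simps)
  finally show ?thesis
    using \<open>0 < N\<close> D by (simp add: pi_mrc_eq sum_divide_distrib[symmetric])
qed

lemma pi_mmrc_eq:
  assumes "0 < N"
  shows "pi_mmrc Cap c1 c2 \<theta>bar N zs x \<theta> k =
     (if \<theta> = \<theta>bar then pi_mrc Cap c1 c2 N zs x \<theta> k
      else if \<theta> < \<theta>bar then
        (if zs k \<in> Cap x then c1 / (real N * mrc_normalizer c1 c2 \<theta>bar)
         else (1 - \<theta> * c1 / mrc_normalizer c1 c2 \<theta>bar) / (real N * (1 - \<theta>)))
      else
        (if zs k \<notin> Cap x then c2 / (real N * mrc_normalizer c1 c2 \<theta>bar)
         else (1 - (1 - \<theta>) * c2 / mrc_normalizer c1 c2 \<theta>bar) / (real N * \<theta>)))"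
  unfolding pi_mmrc_def mrc_normalizer_def Let_def using assms by simp

lemma mmrc_absorbing_weight_below:
  assumes c: "0 < c2" "c2 \<le> c1" and \<theta>: "0 \<le> \<theta>" "\<theta> < \<theta>bar" "\<theta>bar \<le> 1"
  shows "c2 / (real N * mrc_normalizer c1 c2 \<theta>)
    \<le> (1 - \<theta> * c1 / mrc_normalizer c1 c2 \<theta>bar) / (real N * (1 - \<theta>))"
proof -
  define D Dbar where "D = mrc_normalizer c1 c2 \<theta>" and "Dbar = mrc_normalizer c1 c2 \<theta>bar"
  have "c2 \<le> D" "D \<le> Dbar"
    using mrc_normalizer_bounds mrc_normalizer_mono c \<theta> unfolding D_def Dbar_def by auto
  have "1 - \<theta> * c1 / D = (1 - \<theta>) * c2 / D"
    using \<open>c2 \<le> D\<close> c unfolding D_def mrc_normalizer_def by (simp add: field_simps)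
  then have "c2 / (real N * D) = (1 - \<theta> * c1 / D) / (real N * (1 - \<theta>))"
    using \<theta> by simp
  also have "\<dots> \<le> (1 - \<theta> * c1 / Dbar) / (real N * (1 - \<theta>))"
  proof (rule divide_right_mono)
    show "1 - \<theta> * c1 / D \<le> 1 - \<theta> * c1 / Dbar"
      using \<open>c2 \<le> D\<close> \<open>D \<le> Dbar\<close> c \<theta> by (simp add: frac_le)
  qed (use \<theta> in simp)
  finally show ?thesis unfolding D_def Dbar_def .
qed

lemma mmrc_absorbing_weight_above:
  assumes c: "0 < c2" "c2 \<le> c1" and \<theta>: "0 \<le> \<theta>bar" "\<theta>bar < \<theta>" "\<theta> \<le> 1"
  shows "1 / real N \<le> (1 - (1 - \<theta>) * c2 / mrc_normalizer c1 c2 \<theta>bar) / (real N * \<theta>)"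
proof -
  define Dbar where "Dbar = mrc_normalizer c1 c2 \<theta>bar"
  have "c2 \<le> Dbar"
    using mrc_normalizer_bounds c \<theta> unfolding Dbar_def by auto
  then have "(1 - \<theta>) * c2 \<le> (1 - \<theta>) * Dbar"
    using \<theta> by (simp add: mult_left_mono)
  then have "\<theta> \<le> 1 - (1 - \<theta>) * c2 / Dbar"
    using \<open>c2 \<le> Dbar\<close> c by (simp add: field_simps)
  then have "\<theta> / (real N * \<theta>) \<le> (1 - (1 - \<theta>) * c2 / Dbar) / (real N * \<theta>)"
    by (rule divide_right_mono) (use \<theta> in simp)
  moreover have "\<theta> / (real N * \<theta>) = 1 / real N"
    using \<theta> by simp
  ultimately show ?thesis unfolding Dbar_def by simp
qed

lemma pi_mmrc_lower_bound:
  assumes c: "0 < c2" "c2 \<le> c1" and \<theta>: "0 \<le> \<theta>" "\<theta> \<le> 1"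
    and \<theta>bar: "0 \<le> \<theta>bar" "\<theta>bar \<le> 1" and "0 < N"
  shows "c2 / (real N * mrc_normalizer c1 c2 \<theta>) \<le> pi_mmrc Cap c1 c2 \<theta>bar N zs x \<theta> k"
proof -
  define D Dbar where "D = mrc_normalizer c1 c2 \<theta>" and "Dbar = mrc_normalizer c1 c2 \<theta>bar"
  have D: "c2 \<le> D" "D \<le> c1" and Dbar: "c2 \<le> Dbar" "Dbar \<le> c1"
    using mrc_normalizer_bounds c \<theta> \<theta>bar unfolding D_def Dbar_def by auto
  have N: "0 < real N" using \<open>0 < N\<close> by simp
  have below_inv_N: "c2 / (real N * D) \<le> 1 / real N"
    using D c N by (simp add: divide_simps)
  consider (equal) "\<theta> = \<theta>bar"
    | (cap_below) "\<theta> < \<theta>bar" "zs k \<in> Cap x" | (rest_below) "\<theta> < \<theta>bar" "zs k \<notin> Cap x"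
    | (cap_above) "\<theta>bar < \<theta>" "zs k \<in> Cap x" | (rest_above) "\<theta>bar < \<theta>" "zs k \<notin> Cap x"
    by linarith
  then show ?thesis
  proof cases
    case equal
    then have "pi_mmrc Cap c1 c2 \<theta>bar N zs x \<theta> k = pi_mrc Cap c1 c2 N zs x \<theta> k"
      by (simp add: pi_mmrc_eq[OF \<open>0 < N\<close>])
    then show ?thesis
      using c N D by (simp add: pi_mrc_eq D_def[symmetric] divide_right_mono)
  next
    case cap_below
    have "1 / real N \<le> c1 / (real N * Dbar)"
      using Dbar c N by (simp add: divide_simps)
    with below_inv_N cap_below show ?thesis
      by (simp add: pi_mmrc_eq[OF \<open>0 < N\<close>] D_def Dbar_def)
  next
    case rest_below
    then show ?thesis
      using mmrc_absorbing_weight_below[OF c \<theta>(1) _ \<theta>bar(2), of N]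
      by (simp add: pi_mmrc_eq[OF \<open>0 < N\<close>])
  next
    case cap_above
    then show ?thesis
      using below_inv_N mmrc_absorbing_weight_above[OF c \<theta>bar(1) _ \<theta>(2), of N]
      by (simp add: pi_mmrc_eq[OF \<open>0 < N\<close>] D_def)
  next
    case rest_above
    have "Dbar \<le> D"
      using rest_above c unfolding D_def Dbar_def by (simp add: mrc_normalizer_mono)
    then have "c2 / (real N * D) \<le> c2 / (real N * Dbar)"
      using Dbar c N by (simp add: frac_le)
    with rest_above show ?thesis
      by (simp add: pi_mmrc_eq[OF \<open>0 < N\<close>] D_def Dbar_def)
  qed
qed

lemma pi_mrc_le_pi_mmrc:
  assumes c: "0 < c2" "c2 \<le> c1" and \<theta>: "0 \<le> \<theta>" "\<theta> \<le> 1"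
    and \<theta>bar: "0 \<le> \<theta>bar" "\<theta>bar \<le> 1" and "0 < N"
  shows "pi_mrc Cap c1 c2 N zs x \<theta> k \<le> c1 / c2 * pi_mmrc Cap c1 c2 \<theta>bar N zs x \<theta> k"
proof -
  have D: "c2 \<le> mrc_normalizer c1 c2 \<theta>"
    using mrc_normalizer_bounds c \<theta> by auto
  have "pi_mrc Cap c1 c2 N zs x \<theta> k \<le> c1 / c2 * (c2 / (real N * mrc_normalizer c1 c2 \<theta>))"
    using c D by (simp add: pi_mrc_eq divide_right_mono)
  also have "\<dots> \<le> c1 / c2 * pi_mmrc Cap c1 c2 \<theta>bar N zs x \<theta> k"
    using mult_left_mono[OF pi_mmrc_lower_bound[OF assms], of "c1 / c2"] c by simp
  finally show ?thesis .
qed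

lemma kl_bits_pi_mrc_pi_mmrc_le:
  assumes c: "0 < c2" "c2 \<le> c1" and \<theta>bar: "0 \<le> \<theta>bar" "\<theta>bar \<le> 1" and "0 < N"
    and \<theta>_def: "\<theta> = real (card {k. k < N \<and> zs k \<in> Cap x}) / real N"
  shows "kl_bits (pi_mrc Cap c1 c2 N zs x \<theta>) (pi_mmrc Cap c1 c2 \<theta>bar N zs x \<theta>) {..<N}
    \<le> log 2 (c1 / c2)"
proof (rule kl_bits_le_log_of_ratio_bound)
  have \<theta>: "0 \<le> \<theta>" "\<theta> \<le> 1"
    unfolding \<theta>_def by (rule card_fraction_bounds)+
  fix k
  show "0 \<le> pi_mrc Cap c1 c2 N zs x \<theta> k"
    using c mrc_normalizer_bounds[OF c(2) \<theta>] by (simp add: pi_mrc_eq)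
  show "pi_mrc Cap c1 c2 N zs x \<theta> k \<le> c1 / c2 * pi_mmrc Cap c1 c2 \<theta>bar N zs x \<theta> k"
    using pi_mrc_le_pi_mmrc[OF c \<theta> \<theta>bar \<open>0 < N\<close>] .
qed (use sum_pi_mrc[OF \<open>0 < N\<close> c, of \<theta> zs Cap x] \<theta>_def c in auto)

theorem lemma3:
  fixes X :: "'x set" and P :: "'z measure" and q :: "'x \<Rightarrow> 'z \<Rightarrow> real"
    and Cap :: "'x \<Rightarrow> 'z set" and c1 c2 \<theta>bar \<epsilon> :: real
    and N :: nat and zs :: "nat \<Rightarrow> 'z" and x :: 'x
  assumes "prob_space P"
    and "is_ldp \<epsilon> X (space P) q"
    and "cap_based X P q Cap c1 c2 \<theta>bar"
    and nondeg: "\<exists>x1\<in>X. \<exists>x2\<in>X. \<exists>z\<in>space P. z \<in> Cap x1 \<and> z \<notin> Cap x2"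
    and "x \<in> X"
    and "N \<ge> 1"
    and "\<forall>k<N. zs k \<in> space P"
  shows "let \<theta> = real (card {k. k < N \<and> zs k \<in> Cap x}) / real N in
    kl_bits (pi_mrc Cap c1 c2 N zs x \<theta>) (pi_mmrc Cap c1 c2 \<theta>bar N zs x \<theta>) {..<N}
      \<le> \<epsilon> * log 2 (exp 1)"
proof -
  from assms(3,5) have c: "0 < c2" "c2 \<le> c1" and "measure P (Cap x) = \<theta>bar"
    unfolding cap_based_def by auto
  then have \<theta>bar: "0 \<le> \<theta>bar" "\<theta>bar \<le> 1"
    using prob_space.prob_le_1[OF assms(1)] by auto
  have "c1 / c2 \<le> exp \<epsilon>"
    using cap_based_ldp_imp_le_exp[OF assms(2,3) nondeg] c by (simp add: pos_divide_le_eq mult.commute)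
  then have log_bound: "log 2 (c1 / c2) \<le> \<epsilon> * log 2 (exp 1)"
    using c log_mono[of 2 "c1 / c2" "exp \<epsilon>"] by (simp add: log_def)
  have "0 < N" using \<open>N \<ge> 1\<close> by simp
  show ?thesis
    unfolding Let_def
    by (rule order_trans[OF kl_bits_pi_mrc_pi_mmrc_le[OF c \<theta>bar \<open>0 < N\<close> refl] log_bound])
qed

end
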